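(* Let $n_1,n_2$ be positive integers. Fix $L\in\mathbb{R}^{n_1\times n_2}$ of rank $r$, a basis matrix $G\in\mathbb{R}^{n_1\times r_G}$ with $L_{\mathrm{new}}:=(I-GG^\top)L$ of rank less than $r$, and a matrix $S_0\in\mathbb{R}^{n_1\times n_2}$ with all entries nonzero. For a random subset $\Omega$ of $\{1,\dots,n_1\}\times\{1,\dots,n_2\}$, let $S=\mathcal P_\Omega S_0$, $M=L+S$, and let "Success" be the event that $(L_{\mathrm{new}},S,L^\top G)$ is the unique solution of $$\min_{\tilde L_{\mathrm{new}},\tilde S,\tilde X}\|\tilde L_{\mathrm{new}}\|_*+\lambda\|\tilde S\|_1\ \text{ s.t. }\ \tilde L_{\mathrm{new}}+G\tilde X^\top+\tilde S=M.$$ If $m_1<m_2<n_1n_2$, then $\mathbb{P}_{\mathrm{Unif}(m_1)}(\mathrm{Success})\ge\mathbb{P}_{\mathrm{Unif}(m_2)}(\mathrm{Success})$.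
   Context: $\mathcal P_\Omega S_0$ keeps the entries of $S_0$ indexed by $\Omega$ and zeroes the rest. $\mathbb{P}_{\mathrm{Unif}(m)}$ is probability when $\Omega$ is uniformly distributed among all index subsets of size $m$. A basis matrix satisfies $G^\top G=I$. $\lambda>0$ is fixed; the variables range over $\tilde L_{\mathrm{new}},\tilde S\in\mathbb{R}^{n_1\times n_2}$, $\tilde X\in\mathbb{R}^{n_2\times r_G}$. *)

theory Defs
  imports "HOL-Probability.Probability_Mass_Function"
          "HOL-Computational_Algebra.Polynomial"
          "Jordan_Normal_Form.DL_Rank"
          "Jordan_Normal_Form.Char_Poly"
begin

definition mrank :: "real mat \<Rightarrow> nat" where
  "mrank A = vec_space.rank (dim_row A) A"

text \<open>Singular values of A: the square roots of the eigenvalues of A^T A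
  (counted with algebraic multiplicity, i.e. the real roots of its characteristic
  polynomial; A^T A is symmetric positive semidefinite, so all its eigenvalues are
  real and nonnegative).\<close>
definition singular_values :: "real mat \<Rightarrow> real multiset" where
  "singular_values A = image_mset sqrt (proots (char_poly (transpose_mat A * A)))"

definition nuclear_norm :: "real mat \<Rightarrow> real" where
  "nuclear_norm A = sum_mset (singular_values A)"

definition l1_norm :: "real mat \<Rightarrow> real" where
  "l1_norm A = (\<Sum>i<dim_row A. \<Sum>j<dim_col A. \<bar>A $$ (i,j)\<bar>)"

definition proj_Omega :: "(nat \<times> nat) set \<Rightarrow> real mat \<Rightarrow> real mat" where
  "proj_Omega \<Omega> S0 = mat (dim_row S0) (dim_col S0)
      (\<lambda>(i,j). if (i,j) \<in> \<Omega> then S0 $$ (i,j) else 0)"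

definition index_subsets :: "nat \<Rightarrow> nat \<Rightarrow> nat \<Rightarrow> (nat \<times> nat) set set" where
  "index_subsets n1 n2 m = {\<Omega>. \<Omega> \<subseteq> {0..<n1} \<times> {0..<n2} \<and> card \<Omega> = m}"

definition prob_unif :: "nat \<Rightarrow> nat \<Rightarrow> nat \<Rightarrow> ((nat \<times> nat) set \<Rightarrow> bool) \<Rightarrow> real" where
  "prob_unif n1 n2 m E = measure_pmf.prob (pmf_of_set (index_subsets n1 n2 m)) {\<Omega>. E \<Omega>}"

definition objective :: "real \<Rightarrow> real mat \<Rightarrow> real mat \<Rightarrow> real" where
  "objective lam Lt Sm = nuclear_norm Lt + lam * l1_norm Sm"

definition feasible :: "nat \<Rightarrow> nat \<Rightarrow> nat \<Rightarrow> real mat \<Rightarrow> real mat \<Rightarrow> real mat \<Rightarrow> real mat \<Rightarrow> real mat \<Rightarrow> bool" where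
  "feasible n1 n2 rG G M Lt Sm X \<longleftrightarrow>
     Lt \<in> carrier_mat n1 n2 \<and> Sm \<in> carrier_mat n1 n2 \<and> X \<in> carrier_mat n2 rG \<and>
     Lt + G * transpose_mat X + Sm = M"

definition unique_solution :: "nat \<Rightarrow> nat \<Rightarrow> nat \<Rightarrow> real \<Rightarrow> real mat \<Rightarrow> real mat \<Rightarrow> real mat \<Rightarrow> real mat \<Rightarrow> real mat \<Rightarrow> bool" where
  "unique_solution n1 n2 rG lam G M Lt Sm X \<longleftrightarrow>
     feasible n1 n2 rG G M Lt Sm X \<and>
     (\<forall>Lt' Sm' X'. feasible n1 n2 rG G M Lt' Sm' X' \<and> (Lt', Sm', X') \<noteq> (Lt, Sm, X) \<longrightarrow>
        objective lam Lt Sm < objective lam Lt' Sm')"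

definition success :: "nat \<Rightarrow> nat \<Rightarrow> nat \<Rightarrow> real \<Rightarrow> real mat \<Rightarrow> real mat \<Rightarrow> real mat \<Rightarrow> (nat \<times> nat) set \<Rightarrow> bool" where
  "success n1 n2 rG lam L G S0 \<Omega> \<longleftrightarrow>
     (let Lnew = (1\<^sub>m n1 - G * transpose_mat G) * L;
          S = proj_Omega \<Omega> S0;
          M = L + S
      in unique_solution n1 n2 rG lam G M Lnew S (transpose_mat L * G))"

end

theory Submission
  imports Defs
begin

text \<open>Success is downward closed in \<open>\<Omega>\<close>. For \<open>\<Omega>' \<subseteq> \<Omega>\<close> write the corruption for \<open>\<Omega>\<close>
  as \<open>S + D\<close>, with \<open>S\<close> the corruption for \<open>\<Omega>'\<close> and \<open>D\<close> supported on \<open>\<Omega> - \<Omega>'\<close>.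
  Every feasible \<open>(L', S', X')\<close> for \<open>S\<close> gives the feasible \<open>(L', S' + D, X')\<close> for \<open>S + D\<close>
  at an extra cost of at most \<open>\<lambda>\<parallel>D\<parallel>\<^sub>1\<close>, while the true solution costs exactly \<open>\<lambda>\<parallel>D\<parallel>\<^sub>1\<close>
  more because \<open>S\<close> and \<open>D\<close> have disjoint supports; so unique optimality passes from
  \<open>S + D\<close> to \<open>S\<close>. For a downward closed family on an \<open>N\<close>-set with \<open>a\<^sub>k\<close> members of
  size \<open>k\<close>, double counting the inclusions between members of sizes \<open>k\<close> and \<open>k + 1\<close>
  gives \<open>(k + 1) a\<^sub>k\<^sub>+\<^sub>1 \<le> (N - k) a\<^sub>k\<close>; as \<open>(k + 1) (N choose k+1) = (N - k) (N choose k)\<close>,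
  the uniform probability \<open>a\<^sub>k / (N choose k)\<close> is antitone in \<open>k\<close>.\<close>

definition layer :: "'a set \<Rightarrow> ('a set \<Rightarrow> bool) \<Rightarrow> nat \<Rightarrow> 'a set set" where
  "layer U E k = {A. A \<subseteq> U \<and> card A = k \<and> E A}"

definition layer_density :: "'a set \<Rightarrow> ('a set \<Rightarrow> bool) \<Rightarrow> nat \<Rightarrow> real" where
  "layer_density U E k = card (layer U E k) / (card U choose k)"

lemma finite_layer: "finite U \<Longrightarrow> finite (layer U E k)"
  unfolding layer_def by (rule finite_subset[of _ "Pow U"]) auto

lemma card_supersets_Suc_le:
  assumes "finite U" "A \<subseteq> U" "card A = k"
  shows "card {B. B \<subseteq> U \<and> card B = Suc k \<and> A \<subseteq> B} \<le> card U - k"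
proof -
  have fin_A: "finite A" using assms(1,2) finite_subset by blast
  have "{B. B \<subseteq> U \<and> card B = Suc k \<and> A \<subseteq> B} \<subseteq> (\<lambda>x. insert x A) ` (U - A)"
  proof
    fix B assume "B \<in> {B. B \<subseteq> U \<and> card B = Suc k \<and> A \<subseteq> B}"
    hence B: "B \<subseteq> U" "card B = Suc k" "A \<subseteq> B" by auto
    then obtain x where x: "x \<in> B" "x \<notin> A"
      using assms(3) by (metis subsetI subset_antisym n_not_Suc_n)
    have "insert x A = B"
      using x B fin_A assms(3) finite_subset[OF B(1) assms(1)]
      by (intro card_subset_eq) auto
    thus "B \<in> (\<lambda>x. insert x A) ` (U - A)" using x B(1) by auto
  qed
  hence "card {B. B \<subseteq> U \<and> card B = Suc k \<and> A \<subseteq> B} \<le> card ((\<lambda>x. insert x A) ` (U - A))"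
    using assms(1) by (intro card_mono) auto
  also have "\<dots> \<le> card (U - A)" by (rule card_image_le) (use assms(1) in auto)
  also have "\<dots> = card U - k" using assms fin_A by (simp add: card_Diff_subset)
  finally show ?thesis .
qed

lemma card_layer_Suc_le:
  assumes fin: "finite U"
    and down: "\<And>A B. B \<subseteq> U \<Longrightarrow> E B \<Longrightarrow> A \<subseteq> B \<Longrightarrow> E A"
  shows "card (layer U E (Suc k)) * Suc k \<le> card (layer U E k) * (card U - k)"
proof -
  have subsets_in_layer: "{A \<in> layer U E k. A \<subseteq> B} = {A. A \<subseteq> B \<and> card A = k}"
    if "B \<in> layer U E (Suc k)" for B
    using that down unfolding layer_def by blast
  have "card (layer U E (Suc k)) * Suc k = (\<Sum>B\<in>layer U E (Suc k). Suc k)"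
    by simp
  also have "\<dots> = (\<Sum>B\<in>layer U E (Suc k). card {A \<in> layer U E k. A \<subseteq> B})"
  proof (rule sum.cong)
    fix B assume B: "B \<in> layer U E (Suc k)"
    hence "finite B" "card B = Suc k" using fin finite_subset unfolding layer_def by auto
    thus "Suc k = card {A \<in> layer U E k. A \<subseteq> B}"
      by (simp add: subsets_in_layer[OF B] n_subsets)
  qed simp
  also have "\<dots> = (\<Sum>A\<in>layer U E k. card {B \<in> layer U E (Suc k). A \<subseteq> B})"
    using sum.swap_restrict[OF finite_layer finite_layer, OF fin fin, of "\<lambda>_ _. 1::nat"]
    by simp
  also have "\<dots> \<le> (\<Sum>A\<in>layer U E k. card U - k)"
  proof (rule sum_mono)
    fix A assume A: "A \<in> layer U E k"
    have "card {B \<in> layer U E (Suc k). A \<subseteq> B} \<le> card {B. B \<subseteq> U \<and> card B = Suc k \<and> A \<subseteq> B}"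
      using fin by (intro card_mono) (auto simp: layer_def finite_subset)
    also have "\<dots> \<le> card U - k"
      using A fin by (intro card_supersets_Suc_le) (auto simp: layer_def)
    finally show "card {B \<in> layer U E (Suc k). A \<subseteq> B} \<le> card U - k" .
  qed
  finally show ?thesis by simp
qed

lemma antimono_layer_density:
  assumes fin: "finite U"
    and down: "\<And>A B. B \<subseteq> U \<Longrightarrow> E B \<Longrightarrow> A \<subseteq> B \<Longrightarrow> E A"
  shows "antimono (layer_density U E)"
  unfolding antimono_iff_le_Suc
proof
  fix k
  define N where "N = card U"
  show "layer_density U E (Suc k) \<le> layer_density U E k"
  proof (cases "Suc k \<le> N")
    case True
    have binom: "Suc k * (N choose Suc k) = (N - k) * (N choose k)"
      using binomial_absorption[of k N] binomial_absorb_comp[of N k] by simp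
    have "card (layer U E (Suc k)) * (N choose k) * Suc k
        = card (layer U E (Suc k)) * Suc k * (N choose k)"
      by (simp only: ac_simps)
    also have "\<dots> \<le> card (layer U E k) * (N - k) * (N choose k)"
      using card_layer_Suc_le[OF fin down, where k=k] unfolding N_def by (rule mult_le_mono1)
    also have "\<dots> = card (layer U E k) * (N choose Suc k) * Suc k"
      by (simp only: mult.assoc binom[symmetric]) (simp only: ac_simps)
    finally have "card (layer U E (Suc k)) * (N choose k) \<le> card (layer U E k) * (N choose Suc k)"
      using mult_le_cancel2 zero_less_Suc by blast
    hence "real (card (layer U E (Suc k))) * (N choose k)
        \<le> real (card (layer U E k)) * (N choose Suc k)"
      by (simp flip: of_nat_mult)
    moreover have "N choose k > 0" "N choose Suc k > 0" using True by auto
    ultimately show ?thesis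
      unfolding layer_density_def N_def[symmetric] by (simp add: divide_simps)
  next
    case False
    \<comment> \<open>There are no \<open>(k+1)\<close>-subsets, and division by \<open>N choose (k+1) = 0\<close> yields \<open>0\<close>.\<close>
    thus ?thesis unfolding layer_density_def N_def[symmetric] by (simp add: binomial_eq_0)
  qed
qed

lemma prob_unif_eq_layer_density:
  assumes "m \<le> n1 * n2"
  shows "prob_unif n1 n2 m E = layer_density ({0..<n1} \<times> {0..<n2}) E m"
proof -
  define U where "U = {0..<n1} \<times> {0..<n2}"
  have fin: "finite U" unfolding U_def by simp
  have subsets: "index_subsets n1 n2 m = {A. A \<subseteq> U \<and> card A = m}"
    unfolding index_subsets_def U_def by simp
  have card_subsets: "card (index_subsets n1 n2 m) = card U choose m"
    unfolding subsets using n_subsets[OF fin] .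
  have "card U = n1 * n2" unfolding U_def by (simp add: card_cartesian_product)
  hence "index_subsets n1 n2 m \<noteq> {}"
    using card_subsets assms by (metis card.empty zero_less_binomial_iff less_nat_zero_code)
  moreover have "finite (index_subsets n1 n2 m)"
    unfolding subsets by (rule finite_subset[of _ "Pow U"]) (use fin in auto)
  moreover have "index_subsets n1 n2 m \<inter> {A. E A} = layer U E m"
    unfolding subsets layer_def by auto
  ultimately show ?thesis
    unfolding prob_unif_def layer_density_def U_def[symmetric]
    by (simp add: measure_pmf_of_set card_subsets)
qed

lemma add_mat_right_cancel:
  fixes A B D :: "'a :: cancel_semigroup_add mat"
  assumes "A \<in> carrier_mat n m" "B \<in> carrier_mat n m" "D \<in> carrier_mat n m" "A + D = B + D"
  shows "A = B"
proof (rule eq_matI)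
  fix i j assume "i < dim_row B" "j < dim_col B"
  moreover have "(A + D) $$ (i, j) = (B + D) $$ (i, j)" using assms(4) by simp
  ultimately show "A $$ (i, j) = B $$ (i, j)" using assms(1-3) by simp
qed (use assms in auto)

lemma l1_norm_add_le:
  assumes "A \<in> carrier_mat n1 n2" "B \<in> carrier_mat n1 n2"
  shows "l1_norm (A + B) \<le> l1_norm A + l1_norm B"
proof -
  have "l1_norm (A + B) = (\<Sum>i<n1. \<Sum>j<n2. \<bar>A $$ (i,j) + B $$ (i,j)\<bar>)"
    using assms by (simp add: l1_norm_def)
  also have "\<dots> \<le> (\<Sum>i<n1. \<Sum>j<n2. \<bar>A $$ (i,j)\<bar> + \<bar>B $$ (i,j)\<bar>)"
    by (intro sum_mono abs_triangle_ineq)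
  also have "\<dots> = l1_norm A + l1_norm B"
    using assms by (simp add: l1_norm_def sum.distrib)
  finally show ?thesis .
qed

lemma unique_solution_remove_sparse_summand:
  assumes opt: "unique_solution n1 n2 rG lam G (M + D) Lt (S + D) X"
    and carriers: "M \<in> carrier_mat n1 n2" "S \<in> carrier_mat n1 n2" "D \<in> carrier_mat n1 n2"
      "G \<in> carrier_mat n1 rG"
    and "lam > 0"
    and l1_split: "l1_norm (S + D) = l1_norm S + l1_norm D"
  shows "unique_solution n1 n2 rG lam G M Lt S X"
proof -
  from opt have Lt: "Lt \<in> carrier_mat n1 n2" and X: "X \<in> carrier_mat n2 rG"
    and eq: "Lt + G * transpose_mat X + (S + D) = M + D"
    unfolding unique_solution_def feasible_def by simp_all
  have GX: "G * transpose_mat X \<in> carrier_mat n1 n2" using X carriers(4) by simp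
  have "Lt + G * transpose_mat X + S + D = M + D"
    using eq Lt GX carriers(2,3) by simp
  moreover have "Lt + G * transpose_mat X + S \<in> carrier_mat n1 n2"
    using Lt GX carriers(2) by simp
  ultimately have "Lt + G * transpose_mat X + S = M"
    using add_mat_right_cancel carriers(1,3) by blast
  hence feasible: "feasible n1 n2 rG G M Lt S X"
    unfolding feasible_def using Lt X carriers(2) by simp
  have "objective lam Lt S < objective lam Lt' Sm'"
    if "feasible n1 n2 rG G M Lt' Sm' X'" "(Lt', Sm', X') \<noteq> (Lt, S, X)" for Lt' Sm' X'
  proof -
    from that(1) have Lt': "Lt' \<in> carrier_mat n1 n2" and Sm': "Sm' \<in> carrier_mat n1 n2"
      and X': "X' \<in> carrier_mat n2 rG" and eq': "Lt' + G * transpose_mat X' + Sm' = M"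
      unfolding feasible_def by auto
    have "G * transpose_mat X' \<in> carrier_mat n1 n2" using X' carriers(4) by simp
    hence "Lt' + G * transpose_mat X' + (Sm' + D) = M + D"
      using Lt' Sm' carriers(3) by (simp flip: eq')
    hence "feasible n1 n2 rG G (M + D) Lt' (Sm' + D) X'"
      unfolding feasible_def using Lt' Sm' X' carriers(3) by simp
    moreover have "(Lt', Sm' + D, X') \<noteq> (Lt, S + D, X)"
      using that(2) add_mat_right_cancel[OF Sm' carriers(2,3)] by auto
    ultimately have "objective lam Lt (S + D) < objective lam Lt' (Sm' + D)"
      using opt unfolding unique_solution_def by blast
    moreover have "lam * l1_norm (Sm' + D) \<le> lam * (l1_norm Sm' + l1_norm D)"
      using l1_norm_add_le[OF Sm' carriers(3)] \<open>lam > 0\<close> by simp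
    ultimately show ?thesis
      unfolding objective_def l1_split by (simp add: algebra_simps)
  qed
  with feasible show ?thesis unfolding unique_solution_def by blast
qed

lemma dim_proj_Omega [simp]:
  "dim_row (proj_Omega \<Omega> S0) = dim_row S0" "dim_col (proj_Omega \<Omega> S0) = dim_col S0"
  by (simp_all add: proj_Omega_def)

lemma index_proj_Omega [simp]:
  "i < dim_row S0 \<Longrightarrow> j < dim_col S0 \<Longrightarrow>
    proj_Omega \<Omega> S0 $$ (i,j) = (if (i,j) \<in> \<Omega> then S0 $$ (i,j) else 0)"
  by (simp add: proj_Omega_def)

lemma proj_Omega_split:
  assumes "\<Omega>' \<subseteq> \<Omega>"
  shows "proj_Omega \<Omega> S0 = proj_Omega \<Omega>' S0 + proj_Omega (\<Omega> - \<Omega>') S0"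
  by (rule eq_matI) (use assms in auto)

lemma l1_norm_proj_Omega_split:
  "l1_norm (proj_Omega \<Omega>' S0 + proj_Omega (\<Omega> - \<Omega>') S0)
     = l1_norm (proj_Omega \<Omega>' S0) + l1_norm (proj_Omega (\<Omega> - \<Omega>') S0)"
proof -
  have "\<bar>proj_Omega \<Omega>' S0 $$ (i,j) + proj_Omega (\<Omega> - \<Omega>') S0 $$ (i,j)\<bar>
      = \<bar>proj_Omega \<Omega>' S0 $$ (i,j)\<bar> + \<bar>proj_Omega (\<Omega> - \<Omega>') S0 $$ (i,j)\<bar>"
    if "i < dim_row S0" "j < dim_col S0" for i j
    using that by simp
  thus ?thesis by (simp add: l1_norm_def sum.distrib)
qed

lemma success_subset:
  assumes "L \<in> carrier_mat n1 n2" "G \<in> carrier_mat n1 rG" "S0 \<in> carrier_mat n1 n2" "lam > 0"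
    and "success n1 n2 rG lam L G S0 \<Omega>" "\<Omega>' \<subseteq> \<Omega>"
  shows "success n1 n2 rG lam L G S0 \<Omega>'"
proof -
  define S where "S = proj_Omega \<Omega>' S0"
  define D where "D = proj_Omega (\<Omega> - \<Omega>') S0"
  have S: "S \<in> carrier_mat n1 n2" and D: "D \<in> carrier_mat n1 n2"
    unfolding S_def D_def using assms(3) by auto
  have "L + proj_Omega \<Omega> S0 = (L + S) + D"
    unfolding proj_Omega_split[OF assms(6)] S_def[symmetric] D_def[symmetric]
    using assms(1) S D by simp
  hence "unique_solution n1 n2 rG lam G ((L + S) + D) ((1\<^sub>m n1 - G * transpose_mat G) * L)
           (S + D) (transpose_mat L * G)"
    using assms(5) unfolding success_def Let_def proj_Omega_split[OF assms(6)] S_def D_def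
    by simp
  moreover have "l1_norm (S + D) = l1_norm S + l1_norm D"
    unfolding S_def D_def by (rule l1_norm_proj_Omega_split)
  moreover have "L + S \<in> carrier_mat n1 n2" using assms(1) S by simp
  ultimately show ?thesis
    unfolding success_def Let_def S_def[symmetric]
    using unique_solution_remove_sparse_summand assms(2,4) S D by blast
qed

theorem proposition2:
  fixes n1 n2 r rG m1 m2 :: nat and lam :: real and L G S0 :: "real mat"
  assumes "n1 > 0" "n2 > 0"
    and "lam > 0"
    and "L \<in> carrier_mat n1 n2" "mrank L = r"
    and "G \<in> carrier_mat n1 rG" "transpose_mat G * G = 1\<^sub>m rG"
    and "mrank ((1\<^sub>m n1 - G * transpose_mat G) * L) < r"
    and "S0 \<in> carrier_mat n1 n2" "\<forall>i<n1. \<forall>j<n2. S0 $$ (i,j) \<noteq> 0"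
    and "m1 < m2" "m2 < n1 * n2"
  shows "prob_unif n1 n2 m1 (success n1 n2 rG lam L G S0)
           \<ge> prob_unif n1 n2 m2 (success n1 n2 rG lam L G S0)"
proof -
  let ?U = "{0..<n1} \<times> {0..<n2}" and ?E = "success n1 n2 rG lam L G S0"
  have "antimono (layer_density ?U ?E)"
    using success_subset assms(3,4,6,9) by (intro antimono_layer_density) auto
  hence "layer_density ?U ?E m2 \<le> layer_density ?U ?E m1"
    using assms(11) by (simp add: antimono_def)
  thus ?thesis
    using assms(11,12) by (simp add: prob_unif_eq_layer_density)
qed

end
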